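(* Let $0<c<1$ and $0<d<1$ be irrational numbers, and let $f(n)=[c(n+1)]-[cn]$ and $g(n)=[d(n+1)]-[dn]$. Then for every nonnegative integer $k$ and every real $t\ge0$, $$\sum_{n\le t} f(n)\,g([cn]+k+1)=[d([c([t]+1)]+k+1)]-[d(k+1)],$$ where the sum is over positive integers $n\le t$.
   Context: $[x]$ is the greatest integer not exceeding $x$. *)

theory Defs
  imports Complex_Main
begin

definition jump :: "real \<Rightarrow> int \<Rightarrow> int" where
  "jump c n = \<lfloor>c * (of_int n + 1)\<rfloor> - \<lfloor>c * of_int n\<rfloor>"

end

theory Submission
  imports Defs
begin

text \<open>For \<open>0 \<le> c \<le> 1\<close> the sequence \<open>a n = \<lfloor>c n\<rfloor>\<close> moves in steps of \<open>0\<close> or \<open>1\<close>, so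
  \<open>jump c n * (G (a n + 1) - G (a n)) = G (a (n + 1)) - G (a n)\<close> for every \<open>G\<close>. With
  \<open>G m = \<lfloor>d (m + k + 1)\<rfloor>\<close> the summand is such an increment and the sum telescopes.\<close>

lemma sum_atLeastAtMost_int_telescope:
  fixes f :: "int \<Rightarrow> 'a::ab_group_add" and m :: int
  assumes "0 \<le> m"
  shows "(\<Sum>n\<in>{1..m}. f (n + 1) - f n) = f (m + 1) - f 1"
  using assms
proof (induction m rule: int_ge_induct)
  case base
  then show ?case by simp
next
  case (step m)
  have "{1..m + 1} = insert (m + 1) {1..m}"
    using step.hyps by auto
  then show ?case using step by simp
qed

lemma jump_eq_0_or_1:
  assumes "0 \<le> c" "c \<le> 1"
  shows "jump c n = 0 \<or> jump c n = 1"
proof -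
  have "c * of_int n \<le> c * (of_int n + 1)" "c * (of_int n + 1) \<le> c * of_int n + 1"
    using assms by (simp_all add: algebra_simps)
  then have "\<lfloor>c * of_int n\<rfloor> \<le> \<lfloor>c * (of_int n + 1)\<rfloor>"
    and "\<lfloor>c * (of_int n + 1)\<rfloor> \<le> \<lfloor>c * of_int n\<rfloor> + 1"
    using floor_mono by fastforce+
  then show ?thesis unfolding jump_def by linarith
qed

lemma mult_diff_eq_diff_if_step_0_or_1:
  fixes a b :: int and G :: "int \<Rightarrow> int"
  assumes "b - a = 0 \<or> b - a = 1"
  shows "(b - a) * (G (a + 1) - G a) = G b - G a"
  using assms by (auto simp: algebra_simps)

lemma jump_mult_jump_eq_diff:
  assumes "0 \<le> c" "c \<le> 1"
  shows "jump c n * jump d (\<lfloor>c * of_int n\<rfloor> + int k + 1)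
    = \<lfloor>d * (of_int \<lfloor>c * (of_int n + 1)\<rfloor> + real k + 1)\<rfloor>
      - \<lfloor>d * (of_int \<lfloor>c * of_int n\<rfloor> + real k + 1)\<rfloor>"
proof -
  define G where "G m = \<lfloor>d * (of_int m + real k + 1)\<rfloor>" for m
  have "jump d (m + int k + 1) = G (m + 1) - G m" for m
    by (simp add: jump_def G_def add_ac)
  then show ?thesis
    using mult_diff_eq_diff_if_step_0_or_1[of "\<lfloor>c * (of_int n + 1)\<rfloor>" "\<lfloor>c * of_int n\<rfloor>" G]
      jump_eq_0_or_1[OF assms, of n]
    by (simp add: jump_def G_def)
qed

theorem lemma8:
  fixes c d t :: real and k :: nat
  assumes "0 < c" "c < 1" "c \<notin> \<rat>"
    and "0 < d" "d < 1" "d \<notin> \<rat>"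
    and "t \<ge> 0"
  shows "(\<Sum>n\<in>{1..\<lfloor>t\<rfloor>}. jump c n * jump d (\<lfloor>c * of_int n\<rfloor> + int k + 1))
         = \<lfloor>d * (of_int \<lfloor>c * (of_int \<lfloor>t\<rfloor> + 1)\<rfloor> + real k + 1)\<rfloor> - \<lfloor>d * (real k + 1)\<rfloor>"
proof -
  define F where "F n = \<lfloor>d * (of_int \<lfloor>c * of_int n\<rfloor> + real k + 1)\<rfloor>" for n :: int
  have "(\<Sum>n\<in>{1..\<lfloor>t\<rfloor>}. jump c n * jump d (\<lfloor>c * of_int n\<rfloor> + int k + 1))
      = (\<Sum>n\<in>{1..\<lfloor>t\<rfloor>}. F (n + 1) - F n)"
    using jump_mult_jump_eq_diff[of c] assms(1,2) by (simp add: F_def)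
  also have "\<dots> = F (\<lfloor>t\<rfloor> + 1) - F 1"
    using assms(7) by (simp add: sum_atLeastAtMost_int_telescope)
  also have "\<lfloor>c\<rfloor> = 0"
    using assms(1,2) by (simp add: floor_eq_iff)
  then have "F 1 = \<lfloor>d * (real k + 1)\<rfloor>"
    by (simp add: F_def)
  finally show ?thesis by (simp add: F_def)
qed

end
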